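(* Let $F$ be an Archimedean vector lattice endowed with the uniform convergence and let $E$ be a majorizing sublattice of $F$. Then every $f\in\overline{E}^{1}_{+}$ is the uniform limit (and the supremum) of an increasing sequence in $E\cap[0_F,f]$; consequently $\overline{E}^{1}_{+}$ consists exactly of the uniform limits of increasing sequences in $E_+$. Moreover, $E$ is super order dense in $\overline{E}$, i.e. for every $f\in\overline{E}_{+}$ there is a countable $G\subset E$ with $f=\bigvee G$ (supremum in $\overline E$).
   Context: For $e\in F_+$, $F_e=\bigcup_{\lambda\ge0}\lambda[-e,e]$ with norm $\|f\|_e=\inf\{\lambda\ge0:|f|\le\lambda e\}$. A net $(f_\alpha)$ converges uniformly to $f$ if there is $e\in F_+$ with $f\in F_e$ and, for every $\varepsilon>0$, eventually $\|f_\alpha-f\|_e\le\varepsilon$. $\overline{E}^1$ (adherence) is the set of uniform limits of nets in $E$; a set is closed if it equals its adherence; $\overline E$ is the intersection of all closed sets containing $E$; for a set $A$, $A_+=A\cap F_+$. A sublattice $E$ is majorizing if for every $f\in F_+$ there is $e\in E$ with $f\le e$. *)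

theory Defs
  imports "HOL-Analysis.Analysis"
begin

definition archimedean_vl :: "('a::{ordered_real_vector,lattice}) itself \<Rightarrow> bool" where
  "archimedean_vl _ \<longleftrightarrow> (\<forall>x y::'a. (\<forall>n::nat. real n *\<^sub>R x \<le> y) \<longrightarrow> x \<le> 0)"

definition vabs :: "'a::{ordered_real_vector,lattice} \<Rightarrow> 'a" where
  "vabs f = sup f (- f)"

definition pos_part_set :: "'a::{ordered_real_vector,lattice} set \<Rightarrow> 'a set" where
  "pos_part_set A = A \<inter> {f. 0 \<le> f}"

definition principal_ideal :: "'a::{ordered_real_vector,lattice} \<Rightarrow> 'a set" where
  "principal_ideal e = (\<Union>c\<in>{0::real..}. {f. - (c *\<^sub>R e) \<le> f \<and> f \<le> c *\<^sub>R e})"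

definition unorm :: "'a::{ordered_real_vector,lattice} \<Rightarrow> 'a \<Rightarrow> real" where
  "unorm e f = Inf {c::real. 0 \<le> c \<and> vabs f \<le> c *\<^sub>R e}"

text \<open>Uniform convergence of a net, represented by a function x along a proper
  filter Fl (the filter of tails of the directed index set).\<close>
definition uconv :: "('i \<Rightarrow> 'a::{ordered_real_vector,lattice}) \<Rightarrow> 'i filter \<Rightarrow> 'a \<Rightarrow> bool" where
  "uconv x Fl f \<longleftrightarrow> (\<exists>e. 0 \<le> e \<and> f \<in> principal_ideal e \<and>
     (\<forall>\<epsilon>>0. \<forall>\<^sub>F \<alpha> in Fl. x \<alpha> - f \<in> principal_ideal e \<and> unorm e (x \<alpha> - f) \<le> \<epsilon>))"

text \<open>Adherence: uniform limits of nets in E.  A net in E is represented by its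
  (proper) tail filter on the ambient type, concentrated on E.\<close>
definition adherence :: "'a::{ordered_real_vector,lattice} set \<Rightarrow> 'a set" where
  "adherence E = {f. \<exists>Fl::'a filter. Fl \<noteq> bot \<and> (\<forall>\<^sub>F y in Fl. y \<in> E) \<and> uconv (\<lambda>y. y) Fl f}"

definition uclosed :: "'a::{ordered_real_vector,lattice} set \<Rightarrow> bool" where
  "uclosed A \<longleftrightarrow> adherence A = A"

definition uclosure :: "'a::{ordered_real_vector,lattice} set \<Rightarrow> 'a set" where
  "uclosure E = \<Inter>{C. uclosed C \<and> E \<subseteq> C}"

definition vector_sublattice :: "'a::{ordered_real_vector,lattice} set \<Rightarrow> bool" where
  "vector_sublattice E \<longleftrightarrow> 0 \<in> E \<and> (\<forall>x\<in>E. \<forall>y\<in>E. x + y \<in> E \<and> sup x y \<in> E \<and> inf x y \<in> E)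
      \<and> (\<forall>c::real. \<forall>x\<in>E. c *\<^sub>R x \<in> E)"

definition majorizing :: "'a::{ordered_real_vector,lattice} set \<Rightarrow> bool" where
  "majorizing E \<longleftrightarrow> (\<forall>f. 0 \<le> f \<longrightarrow> (\<exists>e\<in>E. f \<le> e))"

definition is_sup_in :: "'a::order set \<Rightarrow> 'a set \<Rightarrow> 'a \<Rightarrow> bool" where
  "is_sup_in A G s \<longleftrightarrow> s \<in> A \<and> (\<forall>g\<in>G. g \<le> s) \<and> (\<forall>u\<in>A. (\<forall>g\<in>G. g \<le> u) \<longrightarrow> s \<le> u)"

end

(*
  Let f >= 0 be a uniform limit of elements of E. Since E is majorizing, the regulator can be
  taken to be some u in E, so there are g n in E with |g n - f| <= u/(n+1). Shifting g n down by
  its error and taking the positive part, h n = (g n - u/(n+1))^+, gives elements of E in [0, f]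
  with f - h n <= 2u/(n+1). Their running suprema increase to f uniformly, and f is their
  supremum by the Archimedean property. The same truncation, applied to countable families,
  shows that the set of all f whose positive part is the supremum of a countable subset of E is
  uniformly closed; as it contains E, it contains the closure of E.
*)
theory Submission
  imports Defs
begin

lemma vabs_le_iff:
  fixes f c :: "'a::{ordered_real_vector,lattice}"
  shows "vabs f \<le> c \<longleftrightarrow> - c \<le> f \<and> f \<le> c"
  unfolding vabs_def by (auto simp: minus_le_iff)

lemma vabs_nonneg:
  fixes f :: "'a::{ordered_real_vector,lattice}"
  shows "0 \<le> vabs f"
proof -
  have "0 \<le> vabs f + vabs f"
    using add_mono[OF sup_ge1 sup_ge2, of f "- f" "- f" f] unfolding vabs_def by simp
  then have "0 \<le> (1/2::real) *\<^sub>R (vabs f + vabs f)" by (rule scaleR_nonneg_nonneg[rotated]) simp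
  then show ?thesis by simp
qed

lemma vabs_diff_leD:
  fixes f g w :: "'a::{ordered_real_vector,lattice}"
  assumes "vabs (g - f) \<le> w"
  shows "g \<le> f + w" "f \<le> g + w"
proof -
  have "g - f \<le> w" "f - g \<le> w"
    using assms unfolding vabs_le_iff by (metis minus_diff_eq minus_le_iff)+
  then show "g \<le> f + w" "f \<le> g + w" by (simp_all add: diff_le_eq add.commute)
qed

lemma principal_ideal_iff:
  "f \<in> principal_ideal e \<longleftrightarrow> (\<exists>c\<ge>0. vabs f \<le> c *\<^sub>R e)"
  unfolding principal_ideal_def vabs_le_iff by auto

lemma principal_ideal_mono:
  fixes e u :: "'a::{ordered_real_vector,lattice}"
  assumes "f \<in> principal_ideal e" "0 \<le> e" "e \<le> u"
  shows "f \<in> principal_ideal u"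
proof -
  obtain c where "0 \<le> c" "vabs f \<le> c *\<^sub>R e"
    using assms(1) unfolding principal_ideal_iff by blast
  moreover have "c *\<^sub>R e \<le> c *\<^sub>R u" using assms(3) \<open>0 \<le> c\<close> by (rule scaleR_left_mono)
  ultimately show ?thesis unfolding principal_ideal_iff by (meson order_trans)
qed

lemma unorm_le:
  assumes "vabs g \<le> c *\<^sub>R e" "0 \<le> c"
  shows "unorm e g \<le> c"
  unfolding unorm_def by (rule cInf_lower) (auto intro: bdd_belowI[of _ 0] simp: assms)

lemma vabs_le_of_unorm_less:
  fixes g e :: "'a::{ordered_real_vector,lattice}"
  assumes "g \<in> principal_ideal e" "0 \<le> e" "unorm e g < c"
  shows "vabs g \<le> c *\<^sub>R e"
proof -
  let ?S = "{c::real. 0 \<le> c \<and> vabs g \<le> c *\<^sub>R e}"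
  obtain c0 where "0 \<le> c0" "vabs g \<le> c0 *\<^sub>R e"
    using assms(1) unfolding principal_ideal_iff by blast
  then have "c0 \<in> ?S" by simp
  then have ne: "?S \<noteq> {}" by blast
  have bdd: "bdd_below ?S" by (rule bdd_belowI[of _ 0]) simp
  have "Inf ?S < c" using assms(3) unfolding unorm_def .
  then obtain c' where "c' \<in> ?S" "c' < c" unfolding cInf_less_iff[OF ne bdd] by blast
  then have "vabs g \<le> c' *\<^sub>R e" by simp
  also have "c' *\<^sub>R e \<le> c *\<^sub>R e" using \<open>c' < c\<close> assms(2) by (intro scaleR_right_mono) simp_all
  finally show ?thesis .
qed

lemma uconv_iff:
  fixes x :: "'i \<Rightarrow> 'a::{ordered_real_vector,lattice}"
  shows "uconv x F f \<longleftrightarrow> (\<exists>e\<ge>0. f \<in> principal_ideal e \<and>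
           (\<forall>\<epsilon>>0. \<forall>\<^sub>F \<alpha> in F. vabs (x \<alpha> - f) \<le> \<epsilon> *\<^sub>R e))"
proof
  assume "uconv x F f"
  then obtain e where e: "0 \<le> e" "f \<in> principal_ideal e" and
    ev: "\<And>\<epsilon>. \<epsilon> > 0 \<Longrightarrow> \<forall>\<^sub>F \<alpha> in F. x \<alpha> - f \<in> principal_ideal e \<and> unorm e (x \<alpha> - f) \<le> \<epsilon>"
    unfolding uconv_def by blast
  have "\<forall>\<^sub>F \<alpha> in F. vabs (x \<alpha> - f) \<le> \<epsilon> *\<^sub>R e" if "\<epsilon> > 0" for \<epsilon>
  \<comment> \<open>the infimum defining \<open>unorm\<close> need not be attained, hence \<open>\<epsilon> / 2\<close>\<close>
  proof (rule eventually_mono[OF ev[of "\<epsilon> / 2"]])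
    show "\<epsilon> / 2 > 0" using that by simp
    show "vabs (x \<alpha> - f) \<le> \<epsilon> *\<^sub>R e"
      if "x \<alpha> - f \<in> principal_ideal e \<and> unorm e (x \<alpha> - f) \<le> \<epsilon> / 2" for \<alpha>
      using that \<open>\<epsilon> > 0\<close> by (intro vabs_le_of_unorm_less[OF _ e(1)]) auto
  qed
  then show "\<exists>e\<ge>0. f \<in> principal_ideal e \<and> (\<forall>\<epsilon>>0. \<forall>\<^sub>F \<alpha> in F. vabs (x \<alpha> - f) \<le> \<epsilon> *\<^sub>R e)"
    using e by blast
next
  assume "\<exists>e\<ge>0. f \<in> principal_ideal e \<and> (\<forall>\<epsilon>>0. \<forall>\<^sub>F \<alpha> in F. vabs (x \<alpha> - f) \<le> \<epsilon> *\<^sub>R e)"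
  then obtain e where e: "0 \<le> e" "f \<in> principal_ideal e"
    and ev: "\<And>\<epsilon>. \<epsilon> > 0 \<Longrightarrow> \<forall>\<^sub>F \<alpha> in F. vabs (x \<alpha> - f) \<le> \<epsilon> *\<^sub>R e"
    by blast
  have "\<forall>\<^sub>F \<alpha> in F. x \<alpha> - f \<in> principal_ideal e \<and> unorm e (x \<alpha> - f) \<le> \<epsilon>"
    if "\<epsilon> > 0" for \<epsilon>
  proof (rule eventually_mono[OF ev[OF that]])
    show "x \<alpha> - f \<in> principal_ideal e \<and> unorm e (x \<alpha> - f) \<le> \<epsilon>"
      if "vabs (x \<alpha> - f) \<le> \<epsilon> *\<^sub>R e" for \<alpha>
      using that \<open>\<epsilon> > 0\<close> unorm_le[OF that] unfolding principal_ideal_iff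
      by (auto intro!: exI[of _ \<epsilon>])
  qed
  then show "uconv x F f" unfolding uconv_def using e by blast
qed

lemma uconv_const:
  fixes f :: "'a::{ordered_real_vector,lattice}"
  shows "uconv (\<lambda>_. f) F f"
  unfolding uconv_iff
proof (intro exI[of _ "vabs f"] conjI allI impI)
  show "0 \<le> vabs f" by (rule vabs_nonneg)
  show "f \<in> principal_ideal (vabs f)" unfolding principal_ideal_iff by (intro exI[of _ 1]) simp
  show "\<forall>\<^sub>F \<alpha> in F. vabs (f - f) \<le> \<epsilon> *\<^sub>R vabs f" if "\<epsilon> > 0" for \<epsilon>
    using that by (simp add: vabs_le_iff scaleR_nonneg_nonneg vabs_nonneg)
qed

lemma uconv_imp_adherence:
  assumes "uconv x F f" "F \<noteq> bot" "\<forall>\<^sub>F \<alpha> in F. x \<alpha> \<in> A"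
  shows "f \<in> adherence A"
proof -
  have "uconv (\<lambda>y. y) (filtermap x F) f"
    using assms(1) unfolding uconv_def eventually_filtermap .
  moreover have "filtermap x F \<noteq> bot" using assms(2) by (simp add: filtermap_bot_iff)
  moreover have "\<forall>\<^sub>F y in filtermap x F. y \<in> A" using assms(3) by (simp add: eventually_filtermap)
  ultimately show ?thesis unfolding adherence_def by blast
qed

lemma subset_adherence: "A \<subseteq> adherence A"
proof
  fix f assume "f \<in> A"
  then show "f \<in> adherence A"
    using uconv_imp_adherence[OF uconv_const[of f sequentially]] by simp
qed

lemma uclosure_subset:
  assumes "E \<subseteq> C" "adherence C \<subseteq> C"
  shows "uclosure E \<subseteq> C"
  using assms subset_adherence[of C] unfolding uclosure_def uclosed_def by blast

lemma adherence_approx: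
  fixes f :: "'a::{ordered_real_vector,lattice}"
  assumes "f \<in> adherence A"
  obtains e where "0 \<le> e" "f \<in> principal_ideal e"
    "\<And>\<epsilon>. \<epsilon> > 0 \<Longrightarrow> \<exists>g\<in>A. vabs (g - f) \<le> \<epsilon> *\<^sub>R e"
proof -
  from assms obtain F e where F: "F \<noteq> bot" "\<forall>\<^sub>F y in F. y \<in> A"
    and e: "0 \<le> e" "f \<in> principal_ideal e"
    and ev: "\<And>\<epsilon>. \<epsilon> > 0 \<Longrightarrow> \<forall>\<^sub>F y in F. vabs (y - f) \<le> \<epsilon> *\<^sub>R e"
    unfolding adherence_def uconv_iff by blast
  have "\<exists>g\<in>A. vabs (g - f) \<le> \<epsilon> *\<^sub>R e" if "\<epsilon> > 0" for \<epsilon>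
    using eventually_happens'[OF F(1) eventually_conj[OF F(2) ev[OF that]]] by blast
  with e show thesis using that by blast
qed

lemma adherence_approx_seq_majorized:
  fixes A E :: "'a::{ordered_real_vector,lattice} set"
  assumes "majorizing E" "f \<in> adherence A"
  obtains u g where "u \<in> E" "0 \<le> u" "f \<in> principal_ideal u"
    "\<And>n. g n \<in> A" "\<And>n. vabs (g n - f) \<le> inverse (real (Suc n)) *\<^sub>R u"
proof -
  obtain e where e: "0 \<le> e" "f \<in> principal_ideal e"
    and approx: "\<And>\<epsilon>. \<epsilon> > 0 \<Longrightarrow> \<exists>g\<in>A. vabs (g - f) \<le> \<epsilon> *\<^sub>R e"
    using adherence_approx[OF assms(2)] by blast
  obtain u where u: "u \<in> E" "e \<le> u" using assms(1) e(1) unfolding majorizing_def by blast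
  have "\<exists>g\<in>A. vabs (g - f) \<le> inverse (real (Suc n)) *\<^sub>R u" for n
  proof -
    obtain g where "g \<in> A" "vabs (g - f) \<le> inverse (real (Suc n)) *\<^sub>R e"
      using approx[of "inverse (real (Suc n))"] by auto
    moreover have "inverse (real (Suc n)) *\<^sub>R e \<le> inverse (real (Suc n)) *\<^sub>R u"
      using u(2) by (rule scaleR_left_mono) simp
    ultimately show ?thesis by (meson order_trans)
  qed
  then obtain g where "\<And>n. g n \<in> A" "\<And>n. vabs (g n - f) \<le> inverse (real (Suc n)) *\<^sub>R u"
    by metis
  moreover have "0 \<le> u" using e(1) u(2) by (rule order_trans)
  moreover have "f \<in> principal_ideal u" using principal_ideal_mono e u(2) by blast
  ultimately show thesis using that u(1) by blast
qed

lemma archimedean_vl_le_zero: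
  fixes a b :: "'a::{ordered_real_vector,lattice}"
  assumes "archimedean_vl TYPE('a)" "0 \<le> b"
    and "\<And>n. a \<le> inverse (real (Suc n)) *\<^sub>R b"
  shows "a \<le> 0"
proof -
  have "real n *\<^sub>R a \<le> b" for n
  proof -
    have "real n *\<^sub>R a \<le> real n *\<^sub>R (inverse (real (Suc n)) *\<^sub>R b)"
      using assms(3) by (rule scaleR_left_mono) simp
    also have "\<dots> = (real n / real (Suc n)) *\<^sub>R b" by (simp add: field_simps)
    also have "\<dots> \<le> 1 *\<^sub>R b" using assms(2) by (intro scaleR_right_mono) simp_all
    finally show ?thesis by simp
  qed
  then show ?thesis using assms(1) unfolding archimedean_vl_def by blast
qed

lemma sup_zero_le_add:
  fixes f g w :: "'a::{ordered_ab_group_add,lattice}"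
  assumes "f \<le> g + w" "0 \<le> w"
  shows "sup f 0 \<le> sup g 0 + w"
proof (rule sup_least)
  show "f \<le> sup g 0 + w" using assms(1) by (rule order_trans) (intro add_right_mono sup_ge1)
  show "0 \<le> sup g 0 + w" using assms(2) by (intro add_nonneg_nonneg) simp_all
qed

lemma truncation_le_sup_zero:
  fixes f g y w :: "'a::{ordered_ab_group_add,lattice}"
  assumes "g \<le> f + w" "0 \<le> w" "y \<le> sup g 0"
  shows "sup (y - w) 0 \<le> sup f 0"
proof -
  have "y \<le> sup f 0 + w" using assms(3) sup_zero_le_add[OF assms(1,2)] by (rule order_trans)
  then have "y - w \<le> sup f 0" by (simp add: diff_le_eq)
  then show ?thesis by simp
qed

lemma vector_sublattice_truncate:
  assumes "vector_sublattice E" "x \<in> E" "u \<in> E"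
  shows "sup (x - c *\<^sub>R u) 0 \<in> E"
proof -
  have "(- c) *\<^sub>R u \<in> E" using assms(1,3) unfolding vector_sublattice_def by blast
  then have "x + (- c) *\<^sub>R u \<in> E" using assms(1,2) unfolding vector_sublattice_def by blast
  then show ?thesis using assms(1) unfolding vector_sublattice_def by simp
qed

lemma incseq_running_sup:
  fixes h :: "nat \<Rightarrow> 'a::lattice"
  assumes "\<And>a b. a \<in> E \<Longrightarrow> b \<in> E \<Longrightarrow> sup a b \<in> E" "\<And>n. h n \<in> E" "\<And>n. h n \<le> f"
  obtains x where "incseq x" "\<And>n. x n \<in> E" "\<And>n. h n \<le> x n" "\<And>n. x n \<le> f"
proof -
  define x where "x = rec_nat (h 0) (\<lambda>n xn. sup xn (h (Suc n)))"
  have x_Suc: "x (Suc n) = sup (x n) (h (Suc n))" for n unfolding x_def by simp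
  have "x n \<in> E \<and> h n \<le> x n \<and> x n \<le> f" for n
  proof (induction n)
    case 0
    then show ?case using assms(2,3) unfolding x_def by simp
  next
    case (Suc n)
    then show ?case using assms x_Suc[of n] by (auto intro: le_supI2)
  qed
  moreover have "incseq x" by (rule incseq_SucI) (simp add: x_Suc)
  ultimately show thesis using that by blast
qed

lemma uconv_from_below:
  fixes x :: "nat \<Rightarrow> 'a::{ordered_real_vector,lattice}"
  assumes "0 \<le> u" "f \<in> principal_ideal u" "\<And>n. x n \<le> f"
    and gap: "\<And>n. f - x n \<le> inverse (real (Suc n)) *\<^sub>R u"
  shows "uconv x sequentially f"
  unfolding uconv_iff
proof (intro exI[of _ u] conjI allI impI)
  have bound: "vabs (x n - f) \<le> inverse (real (Suc n)) *\<^sub>R u" for n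
  proof -
    have "- (inverse (real (Suc n)) *\<^sub>R u) \<le> x n - f"
      using gap[of n] by (metis minus_diff_eq minus_le_iff)
    moreover have "x n - f \<le> inverse (real (Suc n)) *\<^sub>R u"
      using assms(1) assms(3)[of n] by (simp add: order_trans[OF _ scaleR_nonneg_nonneg])
    ultimately show ?thesis unfolding vabs_le_iff by simp
  qed
  fix \<epsilon> :: real assume "\<epsilon> > 0"
  have "\<forall>\<^sub>F n in sequentially. inverse (real (Suc n)) < \<epsilon>"
    using order_tendstoD(2)[OF LIMSEQ_inverse_real_of_nat \<open>\<epsilon> > 0\<close>] .
  then show "\<forall>\<^sub>F n in sequentially. vabs (x n - f) \<le> \<epsilon> *\<^sub>R u"
  proof (rule eventually_mono)
    fix n assume "inverse (real (Suc n)) < \<epsilon>"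
    then have "inverse (real (Suc n)) *\<^sub>R u \<le> \<epsilon> *\<^sub>R u"
      using assms(1) by (intro scaleR_right_mono) simp_all
    with bound[of n] show "vabs (x n - f) \<le> \<epsilon> *\<^sub>R u" by (rule order_trans)
  qed
qed (use assms in simp_all)

lemma is_sup_in_from_below:
  fixes x :: "nat \<Rightarrow> 'a::{ordered_real_vector,lattice}"
  assumes "archimedean_vl TYPE('a)" "0 \<le> u" "\<And>n. x n \<le> f"
    and gap: "\<And>n. f - x n \<le> inverse (real (Suc n)) *\<^sub>R u"
  shows "is_sup_in UNIV (range x) f"
  unfolding is_sup_in_def
proof (intro conjI ballI allI impI)
  show "y \<le> f" if "y \<in> range x" for y using that assms(3) by auto
  fix v assume "\<forall>y\<in>range x. y \<le> v"
  then have "f - v \<le> inverse (real (Suc n)) *\<^sub>R u" for n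
    using gap[of n] by (meson diff_left_mono order_trans rangeI)
  then have "f - v \<le> 0" by (rule archimedean_vl_le_zero[OF assms(1,2)])
  then show "f \<le> v" by simp
qed simp

lemma adherence_nonneg_approx_from_below:
  fixes E :: "'a::{ordered_real_vector,lattice} set"
  assumes "vector_sublattice E" "majorizing E" "f \<in> adherence E" "0 \<le> f"
  obtains u h where "0 \<le> u" "f \<in> principal_ideal u"
    "\<And>n. h n \<in> E" "\<And>n. 0 \<le> h n" "\<And>n. h n \<le> f"
    "\<And>n. f - h n \<le> inverse (real (Suc n)) *\<^sub>R u"
proof -
  obtain u g where u: "u \<in> E" "0 \<le> u" "f \<in> principal_ideal u" and g: "\<And>n. g n \<in> E"
    and approx: "\<And>n. vabs (g n - f) \<le> inverse (real (Suc n)) *\<^sub>R u"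
    using adherence_approx_seq_majorized[OF assms(2,3)] by blast
  define w where "w n = inverse (real (Suc n)) *\<^sub>R u" for n
  define h where "h n = sup (g n - w n) 0" for n
  have w_nonneg: "0 \<le> w n" for n unfolding w_def using u(2) by (simp add: scaleR_nonneg_nonneg)
  have approx': "g n \<le> f + w n" "f \<le> g n + w n" for n
    using vabs_diff_leD[OF approx[of n]] unfolding w_def by simp_all
  have "0 \<le> 2 *\<^sub>R u" using u(2) by (simp add: scaleR_nonneg_nonneg)
  moreover have "f \<in> principal_ideal (2 *\<^sub>R u)"
    using principal_ideal_mono[OF u(3) u(2)] u(2) by (simp add: scaleR_2)
  moreover have "h n \<in> E" for n unfolding h_def w_def using vector_sublattice_truncate[OF assms(1) g u(1)] .
  moreover have "0 \<le> h n" for n unfolding h_def by simp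
  moreover have "h n \<le> f" for n
  proof -
    have "h n \<le> sup f 0" unfolding h_def using approx'(1) w_nonneg by (rule truncation_le_sup_zero) simp
    then show ?thesis using assms(4) by (simp add: sup_absorb1)
  qed
  moreover have "f - h n \<le> inverse (real (Suc n)) *\<^sub>R (2 *\<^sub>R u)" for n
  proof -
    have "sup (g n) 0 \<le> h n + w n" unfolding h_def using w_nonneg by (intro sup_zero_le_add) simp_all
    have "f \<le> sup (g n) 0 + w n" using sup_zero_le_add[OF approx'(2) w_nonneg] assms(4) by (simp add: sup_absorb1)
    also have "\<dots> \<le> h n + 2 *\<^sub>R w n"
      using \<open>sup (g n) 0 \<le> h n + w n\<close> by (simp add: scaleR_2 add.assoc)
    finally show ?thesis unfolding w_def by (simp add: diff_le_eq add.commute mult.commute)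
  qed
  ultimately show thesis by (rule that)
qed

lemma adherence_nonneg_incseq_approx:
  fixes E :: "'a::{ordered_real_vector,lattice} set"
  assumes "archimedean_vl TYPE('a)" "vector_sublattice E" "majorizing E"
    and "f \<in> adherence E" "0 \<le> f"
  shows "\<exists>x. incseq x \<and> (\<forall>n. x n \<in> E \<and> 0 \<le> x n \<and> x n \<le> f) \<and>
           uconv x sequentially f \<and> is_sup_in UNIV (range x) f"
proof -
  obtain u h where u: "0 \<le> u" "f \<in> principal_ideal u"
    and h: "\<And>n. h n \<in> E" "\<And>n. 0 \<le> h n" "\<And>n. h n \<le> f"
    and h_gap: "\<And>n. f - h n \<le> inverse (real (Suc n)) *\<^sub>R u"
    using adherence_nonneg_approx_from_below[OF assms(2-5)] by blast
  have sup_closed: "\<And>a b. a \<in> E \<Longrightarrow> b \<in> E \<Longrightarrow> sup a b \<in> E"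
    using assms(2) unfolding vector_sublattice_def by blast
  obtain x where x: "incseq x" "\<And>n. x n \<in> E" "\<And>n. h n \<le> x n" "\<And>n. x n \<le> f"
    using incseq_running_sup[of E h f, OF sup_closed h(1) h(3)] by blast
  have x_gap: "f - x n \<le> inverse (real (Suc n)) *\<^sub>R u" for n
    using diff_left_mono[OF x(3)] h_gap by (rule order_trans)
  have "0 \<le> x n" for n using h(2) x(3) by (rule order_trans)
  then show ?thesis
    using x(1,2,4) uconv_from_below[OF u x(4) x_gap] is_sup_in_from_below[OF assms(1) u(1) x(4) x_gap]
    by (intro exI[of _ x]) simp
qed

lemma uconv_nonneg:
  fixes x :: "'i \<Rightarrow> 'a::{ordered_real_vector,lattice}"
  assumes "archimedean_vl TYPE('a)" "uconv x F f" "F \<noteq> bot" "\<forall>\<^sub>F \<alpha> in F. 0 \<le> x \<alpha>"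
  shows "0 \<le> f"
proof -
  obtain e where e: "0 \<le> e"
    and ev: "\<And>\<epsilon>. \<epsilon> > 0 \<Longrightarrow> \<forall>\<^sub>F \<alpha> in F. vabs (x \<alpha> - f) \<le> \<epsilon> *\<^sub>R e"
    using assms(2) unfolding uconv_iff by blast
  have "- f \<le> inverse (real (Suc n)) *\<^sub>R e" for n
  proof -
    have "\<forall>\<^sub>F \<alpha> in F. vabs (x \<alpha> - f) \<le> inverse (real (Suc n)) *\<^sub>R e" by (rule ev) simp
    then obtain \<alpha> where "0 \<le> x \<alpha>" "vabs (x \<alpha> - f) \<le> inverse (real (Suc n)) *\<^sub>R e"
      using eventually_happens'[OF assms(3) eventually_conj[OF assms(4)]] by blast
    then have "- f \<le> x \<alpha> - f" "x \<alpha> - f \<le> inverse (real (Suc n)) *\<^sub>R e"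
      unfolding vabs_le_iff by simp_all
    then show ?thesis by (rule order_trans)
  qed
  then have "- f \<le> 0" by (rule archimedean_vl_le_zero[OF assms(1) e])
  then show ?thesis by simp
qed

text \<open>Using the positive part lets every element of \<open>E\<close>, not only the positive ones, belong
  to this set, as a closed superset of \<open>E\<close> must.\<close>

definition countable_sups :: "'a::{ordered_real_vector,lattice} set \<Rightarrow> 'a set" where
  "countable_sups E = {f. \<exists>G\<subseteq>E. countable G \<and> is_sup_in UNIV G (sup f 0)}"

lemma subset_countable_sups:
  assumes "vector_sublattice E"
  shows "E \<subseteq> countable_sups E"
proof
  fix f assume "f \<in> E"
  then have "sup f 0 \<in> E" using assms unfolding vector_sublattice_def by blast
  moreover have "is_sup_in UNIV {sup f 0} (sup f 0)" unfolding is_sup_in_def by simp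
  ultimately show "f \<in> countable_sups E" unfolding countable_sups_def by blast
qed

lemma is_sup_in_truncated_sups:
  fixes f :: "'a::{ordered_real_vector,lattice}"
  assumes "archimedean_vl TYPE('a)" "0 \<le> u"
    and approx: "\<And>n. vabs (g n - f) \<le> inverse (real (Suc n)) *\<^sub>R u"
    and G: "\<And>n. is_sup_in UNIV (G n) (sup (g n) 0)"
  shows "is_sup_in UNIV (\<Union>n. (\<lambda>y. sup (y - inverse (real (Suc n)) *\<^sub>R u) 0) ` G n) (sup f 0)"
proof -
  define w where "w n = inverse (real (Suc n)) *\<^sub>R u" for n
  have w_nonneg: "0 \<le> w n" for n unfolding w_def using assms(2) by (simp add: scaleR_nonneg_nonneg)
  have approx': "g n \<le> f + w n" "f \<le> g n + w n" for n
    using vabs_diff_leD[OF approx[of n]] unfolding w_def by simp_all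
  have upper: "sup (y - w n) 0 \<le> sup f 0" if "y \<in> G n" for n y
    using approx'(1) w_nonneg by (rule truncation_le_sup_zero) (use G that in \<open>simp add: is_sup_in_def\<close>)
  have least: "sup f 0 \<le> v" if v: "\<forall>n. \<forall>y\<in>G n. sup (y - w n) 0 \<le> v" for v
  proof -
    have "sup f 0 - v \<le> inverse (real (Suc n)) *\<^sub>R (2 *\<^sub>R u)" for n
    proof -
      have "y \<le> v + w n" if "y \<in> G n" for y
      proof -
        have "sup (y - w n) 0 \<le> v" using v that by blast
        then have "y - w n \<le> v" by (rule order_trans[OF sup_ge1])
        then show ?thesis by (simp add: diff_le_eq)
      qed
      then have "sup (g n) 0 \<le> v + w n" using G[of n] unfolding is_sup_in_def by blast
      have "sup f 0 \<le> sup (g n) 0 + w n" using approx'(2) w_nonneg by (rule sup_zero_le_add)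
      also have "\<dots> \<le> v + 2 *\<^sub>R w n"
        using \<open>sup (g n) 0 \<le> v + w n\<close> by (simp add: scaleR_2 add.assoc)
      finally show ?thesis unfolding w_def by (simp add: diff_le_eq add.commute mult.commute)
    qed
    moreover have "0 \<le> 2 *\<^sub>R u" using assms(2) by (simp add: scaleR_nonneg_nonneg)
    ultimately have "sup f 0 - v \<le> 0" using archimedean_vl_le_zero[OF assms(1)] by blast
    then show ?thesis by simp
  qed
  let ?H = "\<Union>n. (\<lambda>y. sup (y - w n) 0) ` G n"
  have "\<forall>h\<in>?H. h \<le> sup f 0" using upper by blast
  moreover have "sup f 0 \<le> v" if "\<forall>h\<in>?H. h \<le> v" for v
    using that by (intro least) blast
  ultimately show ?thesis unfolding is_sup_in_def w_def[symmetric] by blast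
qed

lemma adherence_countable_sups_subset:
  fixes E :: "'a::{ordered_real_vector,lattice} set"
  assumes "archimedean_vl TYPE('a)" "vector_sublattice E" "majorizing E"
  shows "adherence (countable_sups E) \<subseteq> countable_sups E"
proof
  fix f assume f: "f \<in> adherence (countable_sups E)"
  obtain u g where u: "u \<in> E" "0 \<le> u" and g: "\<And>n. g n \<in> countable_sups E"
    and approx: "\<And>n. vabs (g n - f) \<le> inverse (real (Suc n)) *\<^sub>R u"
    using adherence_approx_seq_majorized[OF assms(3) f] by metis
  have "\<forall>n. \<exists>G. G \<subseteq> E \<and> countable G \<and> is_sup_in UNIV G (sup (g n) 0)"
    using g unfolding countable_sups_def by blast
  then obtain G where "\<forall>n. G n \<subseteq> E \<and> countable (G n) \<and> is_sup_in UNIV (G n) (sup (g n) 0)"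
    by (rule choice[THEN exE])
  then have G: "\<And>n. G n \<subseteq> E" "\<And>n. countable (G n)" "\<And>n. is_sup_in UNIV (G n) (sup (g n) 0)"
    by simp_all
  let ?H = "\<Union>n. (\<lambda>y. sup (y - inverse (real (Suc n)) *\<^sub>R u) 0) ` G n"
  have "?H \<subseteq> E"
    unfolding UN_subset_iff image_subset_iff
    using G(1) vector_sublattice_truncate[OF assms(2) _ u(1)] by blast
  moreover have "countable ?H" by (intro countable_UN countable_image G(2)) simp
  moreover have "is_sup_in UNIV ?H (sup f 0)"
    using is_sup_in_truncated_sups[OF assms(1) u(2) approx G(3)] .
  ultimately show "f \<in> countable_sups E" unfolding countable_sups_def by blast
qed

lemma pos_part_adherence_eq_incseq_limits:
  fixes E :: "'a::{ordered_real_vector,lattice} set"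
  assumes "archimedean_vl TYPE('a)" "vector_sublattice E" "majorizing E"
  shows "pos_part_set (adherence E) =
    {f. \<exists>x::nat \<Rightarrow> 'a. incseq x \<and> (\<forall>n. x n \<in> pos_part_set E) \<and> uconv x sequentially f}"
proof (intro set_eqI iffI)
  fix f assume "f \<in> pos_part_set (adherence E)"
  then obtain x where "incseq x" "\<forall>n. x n \<in> E \<and> 0 \<le> x n" "uconv x sequentially f"
    using adherence_nonneg_incseq_approx[OF assms] unfolding pos_part_set_def by blast
  then show "f \<in> {f. \<exists>x. incseq x \<and> (\<forall>n. x n \<in> pos_part_set E) \<and> uconv x sequentially f}"
    unfolding pos_part_set_def by auto
next
  fix f assume "f \<in> {f. \<exists>x::nat \<Rightarrow> 'a. incseq x \<and> (\<forall>n. x n \<in> pos_part_set E) \<and> uconv x sequentially f}"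
  then obtain x :: "nat \<Rightarrow> 'a" where x: "\<forall>n. x n \<in> E \<and> 0 \<le> x n" "uconv x sequentially f"
    unfolding pos_part_set_def by blast
  have "f \<in> adherence E" using uconv_imp_adherence[OF x(2)] x(1) by simp
  moreover have "0 \<le> f" using uconv_nonneg[OF assms(1) x(2)] x(1) by simp
  ultimately show "f \<in> pos_part_set (adherence E)" unfolding pos_part_set_def by simp
qed

lemma uclosure_nonneg_countable_sup:
  fixes E :: "'a::{ordered_real_vector,lattice} set"
  assumes "archimedean_vl TYPE('a)" "vector_sublattice E" "majorizing E"
    and f: "f \<in> pos_part_set (uclosure E)"
  shows "\<exists>G. G \<subseteq> E \<and> countable G \<and> is_sup_in (uclosure E) G f"
proof -
  have "uclosure E \<subseteq> countable_sups E"
    using subset_countable_sups[OF assms(2)] adherence_countable_sups_subset[OF assms(1-3)]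
    by (rule uclosure_subset)
  moreover have f': "f \<in> uclosure E" "0 \<le> f" using f unfolding pos_part_set_def by simp_all
  ultimately have "f \<in> countable_sups E" by blast
  then obtain G where "G \<subseteq> E" "countable G" "is_sup_in UNIV G (sup f 0)"
    unfolding countable_sups_def by blast
  moreover have "sup f 0 = f" using f'(2) by (rule sup_absorb1)
  ultimately have "G \<subseteq> E" "countable G" "is_sup_in (uclosure E) G f"
    using f'(1) unfolding is_sup_in_def by simp_all
  then show ?thesis by blast
qed

theorem proposition11p3:
  fixes E :: "'a::{ordered_real_vector,lattice} set"
  assumes arch: "archimedean_vl TYPE('a)"
    and sub: "vector_sublattice E"
    and maj: "majorizing E"
  shows "(\<forall>f\<in>pos_part_set (adherence E). \<exists>x::nat \<Rightarrow> 'a.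
            incseq x \<and> (\<forall>n. x n \<in> E \<and> 0 \<le> x n \<and> x n \<le> f) \<and>
            uconv x sequentially f \<and> is_sup_in UNIV (range x) f)
     \<and> pos_part_set (adherence E) =
         {f. \<exists>x::nat \<Rightarrow> 'a. incseq x \<and> (\<forall>n. x n \<in> pos_part_set E) \<and> uconv x sequentially f}
     \<and> (\<forall>f\<in>pos_part_set (uclosure E). \<exists>G. G \<subseteq> E \<and> countable G \<and> is_sup_in (uclosure E) G f)"
  using adherence_nonneg_incseq_approx[OF arch sub maj]
    pos_part_adherence_eq_incseq_limits[OF arch sub maj]
    uclosure_nonneg_countable_sup[OF arch sub maj]
  unfolding pos_part_set_def by blast

end
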